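(* In the setting below, assume $y^*\in\mathcal D$ (a word of length one) and let $V=\sum_{n=0}^{N_1-1}\log|M_{-n}|=\log|B_0|$. Then for every $\delta>0$, $P(V\in\delta\mathbb Z\mid Z_0=y^* )<1$.
   Context: Setting. $(X_n)_{n\in\mathbb Z}$ is a C-chain on a finite alphabet $\mathcal D$: stationary, all finite cylinders have positive probability, the conditional probabilities $P(X_0=i_0\mid X_{-k}=i_k,k\ge1)$ exist as limits of finite-past conditionals, and $\gamma_n=\sup\{|P(X_0=i_0\mid X_{-k}=i_k,k\ge1)/P(X_0=j_0\mid X_{-k}=j_k,k\ge1)-1|:i_k=j_k,k\le n\}$ are finite with $\limsup\frac1n\log\gamma_n<0$. Coefficients are induced: independent pairs $(Q_{n,i},M_{n,i})_{n\in\mathbb Z,i\in\mathcal D}$, i.i.d. in $n$ for fixed $i$, independent of everything else, $Q_n=Q_{n,X_n}$, $M_n=M_{n,X_n}$. Hypotheses: (i) $|Q_0|<q_0$, $m_0^{-1}<|M_0|<m_0$ a.s.; (iii) for every $\delta>0$, $P(\log|M_0|\in\delta\mathbb Z\mid M_0\neq0)<1$, where $\delta\mathbb Z=\{k\delta:k\in\mathbb Z\}$. Markov representation: let $\mathcal S=\bigcup_{n\ge1}\mathcal D^n$ and $\zeta(s_1,\dots,s_n)=s_n$. On an enlarged space there is a stationary irreducible Markov chain $(Y_n)_{n\in\mathbb Z}$ on $\mathcal S$ (independent of the $(Q_{n,i},M_{n,i})$) with $X_n=\zeta(Y_n)$, and constants $r_0\in\mathbb N$ (even), $\delta_0>0$,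 such that from state $(y_1,\dots,y_s)$ the chain moves only to a word of length 1 or to $(y_1,\dots,y_s,x)$; given that it moves to length 1, the new letter has law $P(Y_0=(y)\mid Y_0\in\mathcal D)$; and $P(Y_{n+1}\in\mathcal D\mid Y_n=(y_1,\dots,y_{mr_0}))=\delta_0$ for all $m\in\mathbb N$. Regeneration: $Z_n=Y_{-n}$; fix $y^*\in\mathcal S$ and $r\in(0,1)$; let $(\eta_n)_{n\in\mathbb Z}$ be i.i.d. with $P(\eta_0=1)=r=1-P(\eta_0=0)$, independent of everything else; $N_0=0$, $N_i=\inf\{n>N_{i-1}:Z_n=y^*,\eta_n=1\}$; $B_i=\prod_{n=N_i}^{N_{i+1}-1}M_{-n}$. *)

theory Defs
  imports "HOL-Probability.Probability"
begin

definition lattice :: "real \<Rightarrow> real set" where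
  "lattice d = {of_int k * d | k. True}"

definition cyl :: "'w measure \<Rightarrow> (int \<Rightarrow> 'w \<Rightarrow> 'b) \<Rightarrow> int \<Rightarrow> 'b list \<Rightarrow> 'w set" where
  "cyl P Xp m xs = {\<omega> \<in> space P. \<forall>j<length xs. Xp (m + int j) \<omega> = xs ! j}"

definition fin_cond :: "'w measure \<Rightarrow> (int \<Rightarrow> 'w \<Rightarrow> 'd) \<Rightarrow> (nat \<Rightarrow> 'd) \<Rightarrow> nat \<Rightarrow> real" where
  "fin_cond P Xp i n =
     measure P {\<omega> \<in> space P. \<forall>k\<le>n. Xp (- int k) \<omega> = i k}
   / measure P {\<omega> \<in> space P. \<forall>k\<in>{1..n}. Xp (- int k) \<omega> = i k}"

definition inf_cond :: "'w measure \<Rightarrow> (int \<Rightarrow> 'w \<Rightarrow> 'd) \<Rightarrow> (nat \<Rightarrow> 'd) \<Rightarrow> real" where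
  "inf_cond P Xp i = lim (fin_cond P Xp i)"

definition gamma_set :: "'w measure \<Rightarrow> (int \<Rightarrow> 'w \<Rightarrow> 'd) \<Rightarrow> nat \<Rightarrow> real set" where
  "gamma_set P Xp n = {\<bar>inf_cond P Xp i / inf_cond P Xp j - 1\<bar> | i j. \<forall>k\<le>n. i k = j k}"

definition gamma :: "'w measure \<Rightarrow> (int \<Rightarrow> 'w \<Rightarrow> 'd) \<Rightarrow> nat \<Rightarrow> real" where
  "gamma P Xp n = Sup (gamma_set P Xp n)"

definition ln_ereal :: "real \<Rightarrow> ereal" where
  "ln_ereal x = (if x = 0 then -\<infinity> else ereal (ln x))"

definition C_chain :: "'w measure \<Rightarrow> (int \<Rightarrow> 'w \<Rightarrow> 'd::finite) \<Rightarrow> bool" where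
  "C_chain P Xp \<longleftrightarrow>
     (\<forall>n. Xp n \<in> measurable P (count_space UNIV)) \<and>
     (\<forall>m xs. measure P (cyl P Xp m xs) = measure P (cyl P Xp 0 xs)) \<and>
     (\<forall>m xs. measure P (cyl P Xp m xs) > 0) \<and>
     (\<forall>i. convergent (fin_cond P Xp i)) \<and>
     (\<forall>n. bdd_above (gamma_set P Xp n)) \<and>
     limsup (\<lambda>n. ln_ereal (gamma P Xp n) / ereal (real n)) < 0"

text \<open>Independence of two random variables with possibly different value types
  (same as the library's indep_var, cf. prob_space.indep_var_eq, without requiring equal types).\<close>
definition indep_rv :: "'w measure \<Rightarrow> 'a measure \<Rightarrow> ('w \<Rightarrow> 'a) \<Rightarrow> 'b measure \<Rightarrow> ('w \<Rightarrow> 'b) \<Rightarrow> bool" where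
  "indep_rv P Ma A Mb B \<longleftrightarrow>
     A \<in> measurable P Ma \<and> B \<in> measurable P Mb \<and>
     prob_space.indep_set P
       (sigma_sets (space P) {A -` S \<inter> space P | S. S \<in> sets Ma})
       (sigma_sets (space P) {B -` S \<inter> space P | S. S \<in> sets Mb})"

text \<open>First regeneration time N_1 = inf{n > 0 : Z_n = y*, eta_n = 1}, with Z_n = Y_{-n}.\<close>
definition regen1 :: "(int \<Rightarrow> 'w \<Rightarrow> 'd list) \<Rightarrow> (int \<Rightarrow> 'w \<Rightarrow> bool) \<Rightarrow> 'd list \<Rightarrow> 'w \<Rightarrow> nat" where
  "regen1 Y eta ystar \<omega> = (LEAST n. n > 0 \<and> Y (- int n) \<omega> = ystar \<and> eta (int n) \<omega>)"

text \<open>V = sum_{n=0}^{N_1-1} log |M_{-n}|, where M_n = Mc n (X_n).\<close>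
definition Vsum :: "(int \<Rightarrow> 'd \<Rightarrow> 'w \<Rightarrow> real) \<Rightarrow> (int \<Rightarrow> 'w \<Rightarrow> 'd) \<Rightarrow> (int \<Rightarrow> 'w \<Rightarrow> 'd list)
    \<Rightarrow> (int \<Rightarrow> 'w \<Rightarrow> bool) \<Rightarrow> 'd list \<Rightarrow> 'w \<Rightarrow> real" where
  "Vsum Mc X Y eta ystar \<omega> =
     (\<Sum>n<regen1 Y eta ystar \<omega>. ln \<bar>Mc (- int n) (X (- int n) \<omega>) \<omega>\<bar>)"

end

theory Submission
  imports Defs
begin

text \<open>
  Write y* = [a] and suppose, for contradiction, that V = log |B_0| lies in the lattice
  dZ (d = delta > 0) almost surely given Z_0 = y*. For a letter b consider the loop of the Markov chain
  a, ab, ..., a b^(r0-1), a ending at time 0 (the restart from a b^(r0-1) is possible since its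
  length is divisible by r0), followed by heads of the thinning coin at time r0. This event has
  positive probability, is independent of the coefficients, and on it the first regeneration time
  is r0 and V equals the loop sum log|M_(0,a)| + log|M_(-1,b)| + ... + log|M_(-(r0-1),b)|.
  Hence every loop sum lies in dZ almost surely. Since the summands are independent and
  identically distributed in time, each log|M_(n,b)| lies almost surely in a fixed coset
  T_b + dZ; comparing the loop sums for b = a and for general b shows that log|M_0| lies
  almost surely in the lattice (d/(r0(r0-1)))Z, contradicting the non-lattice hypothesis (iii).
\<close>

lemma lattice_iff: "x \<in> lattice d \<longleftrightarrow> (\<exists>k::int. x = of_int k * d)"
  unfolding lattice_def by blast

lemma lattice_zero: "0 \<in> lattice d"
  unfolding lattice_iff by (rule exI[of _ 0]) simp

lemma lattice_add: "x \<in> lattice d \<Longrightarrow> y \<in> lattice d \<Longrightarrow> x + y \<in> lattice d"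
proof -
  assume "x \<in> lattice d" "y \<in> lattice d"
  then obtain k l :: int where "x = of_int k * d" "y = of_int l * d" unfolding lattice_iff by blast
  then have "x + y = of_int (k + l) * d" by (simp add: distrib_right)
  then show ?thesis unfolding lattice_iff by blast
qed

lemma lattice_diff: "x \<in> lattice d \<Longrightarrow> y \<in> lattice d \<Longrightarrow> x - y \<in> lattice d"
proof -
  assume "x \<in> lattice d" "y \<in> lattice d"
  then obtain k l :: int where "x = of_int k * d" "y = of_int l * d" unfolding lattice_iff by blast
  then have "x - y = of_int (k - l) * d" by (simp add: left_diff_distrib)
  then show ?thesis unfolding lattice_iff by blast
qed

lemma lattice_mult_int: "x \<in> lattice d \<Longrightarrow> of_int m * x \<in> lattice d"
proof -
  assume "x \<in> lattice d"
  then obtain k :: int where "x = of_int k * d" unfolding lattice_iff by blast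
  then have "of_int m * x = of_int (m * k) * d" by simp
  then show ?thesis unfolding lattice_iff by blast
qed

lemma lattice_sum:
  "(\<And>i. i \<in> A \<Longrightarrow> f i \<in> lattice d) \<Longrightarrow> (\<Sum>i\<in>A. f i) \<in> lattice d"
  by (induction A rule: infinite_finite_induct) (auto intro: lattice_add lattice_zero)

lemma lattice_borel [measurable]: "lattice d \<in> sets borel"
proof -
  have "lattice d = range (\<lambda>k::int. of_int k * d)" by (auto simp: lattice_def)
  then have "countable (lattice d)" by simp
  then show ?thesis by (rule sets.countable[rotated]) auto
qed

lemma lattice_div:
  assumes "of_nat K * x \<in> lattice d" "K > 0"
  shows "x \<in> lattice (d / of_nat K)"
proof -
  from assms obtain k :: int where "of_nat K * x = of_int k * d" by (auto simp: lattice_iff)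
  then have "x = of_int k * (d / of_nat K)" using assms(2) by (simp add: field_simps)
  then show ?thesis by (auto simp: lattice_iff)
qed

lemma lattice_refine:
  assumes ta: "of_nat (Suc m) * ta \<in> lattice d" and tac: "ta + of_nat m * tc \<in> lattice d"
    and x: "x - tc \<in> lattice d" and m: "m > 0"
  shows "x \<in> lattice (d / of_nat (Suc m * m))"
proof (rule lattice_div)
  have "of_int (int (Suc m * m)) * (x - tc) + (of_int (int (Suc m)) * (ta + of_nat m * tc)
      - of_nat (Suc m) * ta) \<in> lattice d"
    by (rule lattice_add[OF lattice_mult_int[OF x] lattice_diff[OF lattice_mult_int[OF tac] ta]])
  then show "of_nat (Suc m * m) * x \<in> lattice d"
    by (simp add: algebra_simps)
qed (use m in simp)

definition lattice_rep :: "real \<Rightarrow> real \<Rightarrow> real" where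
  "lattice_rep d x = x - d * of_int \<lfloor>x / d\<rfloor>"

lemma lattice_rep_measurable [measurable]: "lattice_rep d \<in> borel_measurable borel"
  unfolding lattice_rep_def by measurable

lemma lattice_rep_diff: "d \<noteq> 0 \<Longrightarrow> x - lattice_rep d x \<in> lattice d"
  unfolding lattice_rep_def lattice_iff by (auto simp: mult.commute)

lemma lattice_rep_eq:
  assumes "x - y \<in> lattice d" "d \<noteq> 0"
  shows "lattice_rep d x = lattice_rep d y"
proof -
  obtain k :: int where k: "x = y + of_int k * d" using assms(1) by (auto simp: lattice_iff algebra_simps)
  have "x / d = y / d + of_int k" using assms(2) unfolding k by (simp add: field_simps)
  then have "\<lfloor>x / d\<rfloor> = \<lfloor>y / d\<rfloor> + k" by simp
  then show ?thesis unfolding lattice_rep_def k by (simp add: algebra_simps)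
qed

lemma eq_by_rat_thresholds:
  fixes x y :: real
  assumes "\<And>q::rat. x \<le> of_rat q \<longleftrightarrow> y \<le> of_rat q"
  shows "x = y"
proof (rule ccontr)
  assume "x \<noteq> y"
  then consider "x < y" | "y < x" by linarith
  then show False
  proof cases
    case 1
    then obtain q where "x < of_rat q" "of_rat q < y" using of_rat_dense by blast
    then show False using assms[of q] by simp
  next
    case 2
    then obtain q where "y < of_rat q" "of_rat q < x" using of_rat_dense by blast
    then show False using assms[of q] by simp
  qed
qed

lemma AE_distr_eq:
  assumes eq: "distr M N X = distr M N Y"
    and X: "X \<in> measurable M N" and Y: "Y \<in> measurable M N" and S: "{x\<in>space N. P x} \<in> sets N"
  shows "(AE \<omega> in M. P (X \<omega>)) \<longleftrightarrow> (AE \<omega> in M. P (Y \<omega>))"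
proof -
  have "(AE \<omega> in M. P (X \<omega>)) \<longleftrightarrow> (AE x in distr M N X. P x)" by (rule AE_distr_iff[symmetric, OF X S])
  also have "\<dots> \<longleftrightarrow> (AE x in distr M N Y. P x)" unfolding eq ..
  also have "\<dots> \<longleftrightarrow> (AE \<omega> in M. P (Y \<omega>))" by (rule AE_distr_iff[OF Y S])
  finally show ?thesis .
qed

context prob_space
begin

lemma indep_vars_rv: "indep_vars M' X I \<Longrightarrow> i \<in> I \<Longrightarrow> random_variable (M' i) (X i)"
  unfolding indep_vars_def by blast

lemma AE_ex:
  assumes "AE x in M. P x"
  shows "\<exists>x\<in>space M. P x"
proof -
  have "AE x in M. \<exists>y\<in>space M. P y" using assms AE_space by eventually_elim blast
  then show ?thesis by simp
qed

lemma cond_prob_ge_1: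
  assumes cp: "\<P>(\<omega> in M. Q \<omega> \<bar> R \<omega>) \<ge> 1" and R: "{\<omega>\<in>space M. R \<omega>} \<in> events"
  shows "prob {\<omega>\<in>space M. R \<omega>} > 0" and "AE \<omega> in M. R \<omega> \<longrightarrow> Q \<omega>"
proof -
  define A where "A = {\<omega>\<in>space M. Q \<omega> \<and> R \<omega>}"
  have cp': "prob A / prob {\<omega>\<in>space M. R \<omega>} \<ge> 1" using cp unfolding cond_prob_def A_def .
  then have "prob {\<omega>\<in>space M. R \<omega>} \<noteq> 0" by auto
  then show Rpos: "prob {\<omega>\<in>space M. R \<omega>} > 0"
    using measure_nonneg[of M "{\<omega>\<in>space M. R \<omega>}"] by linarith
  then have A_ge: "prob A \<ge> prob {\<omega>\<in>space M. R \<omega>}" using cp' by (simp add: le_divide_eq)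
  then have A: "A \<in> events" using Rpos measure_notin_sets[of A M] by fastforce
  have sub: "A \<subseteq> {\<omega>\<in>space M. R \<omega>}" unfolding A_def by blast
  have "prob ({\<omega>\<in>space M. R \<omega>} - A) = 0"
    using finite_measure_Diff[OF R A sub] A_ge finite_measure_mono[OF sub R]
      measure_nonneg[of M "{\<omega>\<in>space M. R \<omega>} - A"] by linarith
  then have "AE \<omega> in M. \<omega> \<notin> {\<omega>\<in>space M. R \<omega>} - A" using prob_eq_0 R A by blast
  then show "AE \<omega> in M. R \<omega> \<longrightarrow> Q \<omega>" using AE_space by eventually_elim (auto simp: A_def)
qed

lemma cond_prob_AE_1:
  assumes "AE \<omega> in M. Q \<omega> \<and> R \<omega>"
    and "{\<omega>\<in>space M. Q \<omega> \<and> R \<omega>} \<in> events" "{\<omega>\<in>space M. R \<omega>} \<in> events"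
  shows "\<P>(\<omega> in M. Q \<omega> \<bar> R \<omega>) = 1"
proof -
  have "prob {\<omega>\<in>space M. Q \<omega> \<and> R \<omega>} = 1" "prob {\<omega>\<in>space M. R \<omega>} = 1"
    using assms prob_Collect_eq_1 by (auto elim: AE_mp)
  then show ?thesis unfolding cond_prob_def by simp
qed

lemma indep_rv_prob:
  assumes ind: "indep_rv M Ma A Mb B"
    and Sa: "{x\<in>space Ma. Pa x} \<in> sets Ma" and Sb: "{y\<in>space Mb. Pb y} \<in> sets Mb"
  shows "prob {\<omega>\<in>space M. Pa (A \<omega>) \<and> Pb (B \<omega>)}
       = prob {\<omega>\<in>space M. Pa (A \<omega>)} * prob {\<omega>\<in>space M. Pb (B \<omega>)}"
proof -
  have A: "A \<in> measurable M Ma" and B: "B \<in> measurable M Mb"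
    and iset: "indep_set (sigma_sets (space M) {A -` S \<inter> space M | S. S \<in> sets Ma})
                         (sigma_sets (space M) {B -` S \<inter> space M | S. S \<in> sets Mb})"
    using ind unfolding indep_rv_def by auto
  have eqA: "{\<omega>\<in>space M. Pa (A \<omega>)} = A -` {x\<in>space Ma. Pa x} \<inter> space M"
    using measurable_space[OF A] by auto
  have eqB: "{\<omega>\<in>space M. Pb (B \<omega>)} = B -` {y\<in>space Mb. Pb y} \<inter> space M"
    using measurable_space[OF B] by auto
  have "prob ({\<omega>\<in>space M. Pa (A \<omega>)} \<inter> {\<omega>\<in>space M. Pb (B \<omega>)})
      = prob {\<omega>\<in>space M. Pa (A \<omega>)} * prob {\<omega>\<in>space M. Pb (B \<omega>)}"
    unfolding eqA eqB using Sa Sb by (intro indep_setD[OF iset]) blast+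
  moreover have "{\<omega>\<in>space M. Pa (A \<omega>)} \<inter> {\<omega>\<in>space M. Pb (B \<omega>)}
      = {\<omega>\<in>space M. Pa (A \<omega>) \<and> Pb (B \<omega>)}" by blast
  ultimately show ?thesis by simp
qed

lemma indep_rv_null:
  assumes ind: "indep_rv M Ma A Mb B"
    and Sa: "{x\<in>space Ma. Pa x} \<in> sets Ma" and Sb: "{y\<in>space Mb. Pb y} \<in> sets Mb"
    and pos: "\<P>(\<omega> in M. Pb (B \<omega>)) > 0"
    and null: "AE \<omega> in M. \<not> (Pa (A \<omega>) \<and> Pb (B \<omega>))"
  shows "AE \<omega> in M. \<not> Pa (A \<omega>)"
proof -
  have "\<P>(\<omega> in M. Pa (A \<omega>)) * \<P>(\<omega> in M. Pb (B \<omega>)) = 0"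
    using indep_rv_prob[OF ind Sa Sb] prob_eq_0_AE[OF null] by simp
  then have "\<P>(\<omega> in M. Pa (A \<omega>)) = 0" using pos by simp
  moreover have A: "A \<in> measurable M Ma" using ind unfolding indep_rv_def by blast
  then have "{\<omega>\<in>space M. Pa (A \<omega>)} = A -` {x\<in>space Ma. Pa x} \<inter> space M"
    using measurable_space[OF A] by auto
  then have "{\<omega>\<in>space M. Pa (A \<omega>)} \<in> events" using measurable_sets[OF A Sa] by simp
  ultimately show ?thesis using prob_Collect_eq_0 by simp
qed

lemma zero_one_thresholds_const:
  fixes U :: "'a \<Rightarrow> real"
  assumes U[measurable]: "U \<in> borel_measurable M"
    and zero_one: "\<And>q. prob {\<omega>\<in>space M. U \<omega> \<le> q} = 0 \<or> prob {\<omega>\<in>space M. U \<omega> \<le> q} = 1"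
  shows "\<exists>t. AE \<omega> in M. U \<omega> = t"
proof -
  define F where "F q = prob {\<omega>\<in>space M. U \<omega> \<le> q}" for q
  have "AE \<omega> in M. U \<omega> \<le> q \<longleftrightarrow> F q = 1" for q
  proof -
    have ev: "{\<omega>\<in>space M. U \<omega> \<le> q} \<in> events" by measurable
    show ?thesis
    proof (cases "F q = 1")
      case True
      then show ?thesis using prob_Collect_eq_1[OF ev] unfolding F_def by (auto elim: AE_mp)
    next
      case False
      then have "F q = 0" using zero_one unfolding F_def by blast
      then show ?thesis using prob_Collect_eq_0[OF ev] False unfolding F_def by (auto elim: AE_mp)
    qed
  qed
  then have ae: "AE \<omega> in M. \<forall>q::rat. U \<omega> \<le> of_rat q \<longleftrightarrow> F (of_rat q) = 1"
    by (simp add: AE_all_countable)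
  obtain \<omega>0 where \<omega>0: "\<forall>q::rat. U \<omega>0 \<le> of_rat q \<longleftrightarrow> F (of_rat q) = 1"
    using AE_ex[OF ae] by blast
  have "AE \<omega> in M. U \<omega> = U \<omega>0"
    using ae by eventually_elim (rule eq_by_rat_thresholds, simp add: \<omega>0)
  then show ?thesis by blast
qed

text \<open>A real random variable that almost surely equals a random variable independent of it is
  almost surely constant: its threshold events are independent of themselves.\<close>
lemma indep_AE_eq_const:
  fixes U W :: "'a \<Rightarrow> real"
  assumes ind: "indep_var borel U borel W" and eq: "AE \<omega> in M. U \<omega> = W \<omega>"
  shows "\<exists>t. AE \<omega> in M. U \<omega> = t"
proof (rule zero_one_thresholds_const)
  show U[measurable]: "U \<in> borel_measurable M" using indep_var_rv1[OF ind] by simp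
  have W[measurable]: "W \<in> borel_measurable M" using indep_var_rv2[OF ind] by simp
  fix q :: real
  define F where "F = prob {\<omega>\<in>space M. U \<omega> \<le> q}"
  have same: "prob {\<omega>\<in>space M. P \<omega>} = F"
    if "AE \<omega> in M. P \<omega> \<longleftrightarrow> U \<omega> \<le> q" "{\<omega>\<in>space M. P \<omega>} \<in> events" for P
    unfolding F_def using that by (intro prob_eq_AE) auto
  have "prob ((\<lambda>\<omega>. (U \<omega>, W \<omega>)) -` ({..q} \<times> {..q}) \<inter> space M)
      = prob (U -` {..q} \<inter> space M) * prob (W -` {..q} \<inter> space M)"
    by (rule indep_varD[OF ind]) auto
  moreover have "(\<lambda>\<omega>. (U \<omega>, W \<omega>)) -` ({..q} \<times> {..q}) \<inter> space M = {\<omega>\<in>space M. U \<omega> \<le> q \<and> W \<omega> \<le> q}"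
    "U -` {..q} \<inter> space M = {\<omega>\<in>space M. U \<omega> \<le> q}"
    "W -` {..q} \<inter> space M = {\<omega>\<in>space M. W \<omega> \<le> q}" by auto
  moreover have "prob {\<omega>\<in>space M. U \<omega> \<le> q \<and> W \<omega> \<le> q} = F" "prob {\<omega>\<in>space M. W \<omega> \<le> q} = F"
    using eq by (intro same; auto elim: AE_mp)+
  ultimately have "F = F * F" unfolding F_def by simp
  then show "F = 0 \<or> F = 1" by (metis mult_cancel_left1)
qed

lemma indep_sum_lattice_coset:
  fixes U W :: "'a \<Rightarrow> real"
  assumes ind: "indep_var borel U borel W" and d: "d \<noteq> 0"
    and sum: "AE \<omega> in M. U \<omega> + W \<omega> \<in> lattice d"
  shows "\<exists>t. AE \<omega> in M. U \<omega> - t \<in> lattice d"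
proof -
  have "indep_var borel (lattice_rep d \<circ> U) borel ((\<lambda>x. lattice_rep d (- x)) \<circ> W)"
    by (rule indep_var_compose[OF ind]) auto
  moreover have "AE \<omega> in M. lattice_rep d (U \<omega>) = lattice_rep d (- W \<omega>)"
    using sum by eventually_elim (simp add: lattice_rep_eq d)
  ultimately obtain t where "AE \<omega> in M. lattice_rep d (U \<omega>) = t"
    using indep_AE_eq_const[of "lattice_rep d \<circ> U" "(\<lambda>x. lattice_rep d (- x)) \<circ> W"]
    by (auto simp: o_def)
  then have "AE \<omega> in M. U \<omega> - t \<in> lattice d"
    by eventually_elim (use lattice_rep_diff[OF d] in auto)
  then show ?thesis ..
qed

end

text \<open>The letters read off backwards from the
  end of the loop are a, b, ..., b.\<close>
definition loop_path :: "'d \<Rightarrow> 'd \<Rightarrow> nat \<Rightarrow> 'd list list" where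
  "loop_path a b k = map (\<lambda>j. a # replicate j b) [0..<k] @ [[a]]"

definition loop_letter :: "'d \<Rightarrow> 'd \<Rightarrow> nat \<Rightarrow> 'd" where
  "loop_letter a b n = (if n = 0 then a else b)"

definition on_loop :: "'d \<Rightarrow> 'd \<Rightarrow> nat \<Rightarrow> (int \<Rightarrow> 'd list) \<Rightarrow> bool" where
  "on_loop a b k f \<longleftrightarrow> (\<forall>j\<le>k. f (- int k + int j) = loop_path a b k ! j)"

lemma length_loop_path [simp]: "length (loop_path a b k) = Suc k"
  by (simp add: loop_path_def)

lemma loop_path_nth: "j < k \<Longrightarrow> loop_path a b k ! j = a # replicate j b"
  by (simp add: loop_path_def nth_append)

lemma loop_path_last [simp]: "loop_path a b k ! k = [a]"
  by (simp add: loop_path_def nth_append)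

lemma cyl_loop_path:
  "cyl P Y (- int k) (loop_path a b k) = {\<omega>\<in>space P. on_loop a b k (\<lambda>n. Y n \<omega>)}"
  unfolding cyl_def on_loop_def by (auto simp: less_Suc_eq_le)

lemma on_loop_end: "on_loop a b k f \<Longrightarrow> f 0 = [a]"
  unfolding on_loop_def by (drule spec[of _ k]) simp

lemma markov_cyl_pos:
  fixes Y :: "int \<Rightarrow> 'w \<Rightarrow> 's"
  assumes markov: "\<And>xs x y. measure P (cyl P Y n (xs @ [x, y])) = measure P (cyl P Y n (xs @ [x])) * p x y"
  shows "l \<noteq> [] \<Longrightarrow> measure P (cyl P Y n [hd l]) > 0 \<Longrightarrow>
    (\<And>j. Suc j < length l \<Longrightarrow> p (l ! j) (l ! Suc j) > 0) \<Longrightarrow> measure P (cyl P Y n l) > 0"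
proof (induction l rule: rev_induct)
  case Nil then show ?case by simp
next
  case (snoc y xs)
  show ?case
  proof (cases "xs = []")
    case True then show ?thesis using snoc.prems by simp
  next
    case False
    then obtain xs' x where xs: "xs = xs' @ [x]" by (cases xs rule: rev_cases) auto
    have "measure P (cyl P Y n xs) > 0"
    proof (rule snoc.IH[OF False])
      show "measure P (cyl P Y n [hd xs]) > 0" using snoc.prems(2) False by simp
    next
      fix j assume "Suc j < length xs"
      then show "p (xs ! j) (xs ! Suc j) > 0" using snoc.prems(3)[of j] by (simp add: nth_append)
    qed
    moreover have "p x y > 0" using snoc.prems(3)[of "length xs'"] xs by (simp add: nth_append)
    moreover have "measure P (cyl P Y n (xs @ [y])) = measure P (cyl P Y n xs) * p x y"
      using markov[of xs' x y] xs by simp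
    ultimately show ?thesis by simp
  qed
qed

lemma reach_nonempty:
  assumes moves: "\<And>x y. x \<noteq> [] \<Longrightarrow> p x y > 0 \<Longrightarrow> length y = 1 \<or> (\<exists>c. y = x @ [c])"
  shows "(x, y) \<in> {(a, b). p a b > 0}\<^sup>* \<Longrightarrow> x \<noteq> [] \<Longrightarrow> y \<noteq> []"
proof (induction rule: rtrancl_induct)
  case base then show ?case by simp
next
  case (step y z)
  then have "p y z > 0" "y \<noteq> []" by auto
  then have "length z = 1 \<or> (\<exists>c. z = y @ [c])" using moves by blast
  then show ?case by auto
qed

text \<open>\<dots> and, if moreover the chain is irreducible, every extension step w \<rightarrow> wc has positive
  probability: the only way into wc (of length at least 2) is from w.\<close>
lemma extension_step_pos:
  fixes p :: "'d list \<Rightarrow> 'd list \<Rightarrow> real"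
  assumes moves: "\<And>x y. x \<noteq> [] \<Longrightarrow> p x y > 0 \<Longrightarrow> length y = 1 \<or> (\<exists>c. y = x @ [c])"
    and irred: "\<And>x y. x \<noteq> [] \<Longrightarrow> y \<noteq> [] \<Longrightarrow> (x, y) \<in> {(a, b). p a b > 0}\<^sup>*"
    and w: "w \<noteq> []"
  shows "p w (w @ [c]) > 0"
proof -
  have "(w @ [c] @ [c], w @ [c]) \<in> {(a, b). p a b > 0}\<^sup>*" using irred by simp
  then show ?thesis
  proof (cases rule: rtranclE)
    case base then show ?thesis by simp
  next
    case (step z)
    have z: "z \<noteq> []" using reach_nonempty[of p, OF moves, of "w @ [c] @ [c]" z] step(1) by simp
    have pz: "p z (w @ [c]) > 0" using step by simp
    then have "length (w @ [c]) = 1 \<or> (\<exists>c'. w @ [c] = z @ [c'])" using moves z by blast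
    then have "w = z" using w by auto
    then show ?thesis using pz by simp
  qed
qed

lemma loop_path_pos:
  fixes Y :: "int \<Rightarrow> 'w \<Rightarrow> 'd list"
  assumes markov: "\<And>xs x y. measure P (cyl P Y n (xs @ [x, y])) = measure P (cyl P Y n (xs @ [x])) * p x y"
    and ext: "\<And>w c. w \<noteq> [] \<Longrightarrow> p w (w @ [c]) > 0"
    and restart: "\<And>x. x \<noteq> [] \<Longrightarrow> k dvd length x \<Longrightarrow> p x [a] > 0"
    and start: "measure P (cyl P Y n [[a]]) > 0" and k: "k > 0"
  shows "measure P (cyl P Y n (loop_path a b k)) > 0"
proof (rule markov_cyl_pos[where p = p, OF markov])
  show "loop_path a b k \<noteq> []" by (simp add: loop_path_def)
  have "hd (loop_path a b k) = [a]"
    using hd_conv_nth[of "loop_path a b k"] loop_path_nth[OF k] by (simp add: loop_path_def)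
  then show "measure P (cyl P Y n [hd (loop_path a b k)]) > 0" using start by simp
next
  fix j assume j: "Suc j < length (loop_path a b k)"
  show "p (loop_path a b k ! j) (loop_path a b k ! Suc j) > 0"
  proof (cases "Suc j < k")
    case True
    then show ?thesis using ext[of "a # replicate j b" b]
      by (simp add: loop_path_nth replicate_append_same)
  next
    case False
    then have "Suc j = k" using j by simp
    then show ?thesis using restart[of "a # replicate j b"] by (simp add: loop_path_nth)
  qed
qed

lemma chain_loop_pos:
  fixes Y :: "int \<Rightarrow> 'w \<Rightarrow> 'd list" and p :: "'d list \<Rightarrow> 'd list \<Rightarrow> real"
  assumes stat: "\<And>m ys. measure P (cyl P Y m ys) = measure P (cyl P Y 0 ys)"
    and markov: "\<And>n xs x y. measure P (cyl P Y n (xs @ [x, y]))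
                                = measure P (cyl P Y n (xs @ [x])) * p x y"
    and irred: "\<And>x y. x \<noteq> [] \<Longrightarrow> y \<noteq> [] \<Longrightarrow> (x, y) \<in> {(a, b). p a b > 0}\<^sup>*"
    and moves: "\<And>x y. x \<noteq> [] \<Longrightarrow> p x y > 0 \<Longrightarrow> length y = 1 \<or> (\<exists>c. y = x @ [c])"
    and restart: "\<And>x b. x \<noteq> [] \<Longrightarrow>
          p x [b] * \<P>(\<omega> in P. length (Y 0 \<omega>) = 1)
            = (\<Sum>c\<in>UNIV. p x [c]) * \<P>(\<omega> in P. Y 0 \<omega> = [b])"
    and restart_mass: "\<And>x. x \<noteq> [] \<Longrightarrow> k dvd length x \<Longrightarrow> (\<Sum>c\<in>UNIV. p x [c]) = delta0"
    and delta0: "delta0 > 0" and k: "k > 0"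
    and start: "\<P>(\<omega> in P. Y 0 \<omega> = [a]) > 0"
  shows "measure P (cyl P Y (- int k) (loop_path a b k)) > 0"
proof (rule loop_path_pos[OF markov extension_step_pos[OF moves irred] _ _ k])
  show "p x [a] > 0" if "x \<noteq> []" "k dvd length x" for x
  proof -
    have "p x [a] * \<P>(\<omega> in P. length (Y 0 \<omega>) = 1) > 0"
      using restart[OF that(1), of a] restart_mass[OF that] delta0 start by simp
    then show ?thesis using measure_nonneg by (metis zero_less_mult_iff not_less)
  qed
  have "cyl P Y 0 [[a]] = {\<omega>\<in>space P. Y 0 \<omega> = [a]}" by (auto simp: cyl_def)
  then show "measure P (cyl P Y (- int k) [[a]]) > 0" using stat[of "- int k" "[[a]]"] start by simp
qed

lemma Vsum_along_loop:
  fixes Y :: "int \<Rightarrow> 'w \<Rightarrow> 'd list"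
  assumes path: "on_loop a b k (\<lambda>n. Y n \<omega>)"
    and coin: "eta (int k) \<omega>" and k: "k > 0"
    and XY: "\<And>n. X n \<omega> = last (Y n \<omega>)"
  shows "Vsum Mc X Y eta [a] \<omega> = (\<Sum>n<k. ln \<bar>Mc (- int n) (loop_letter a b n) \<omega>\<bar>)"
proof -
  have Y_back: "Y (- int n) \<omega> = (if n = 0 \<or> n = k then [a] else a # replicate (k - n) b)"
    if "n \<le> k" for n
  proof -
    have "Y (- int n) \<omega> = loop_path a b k ! (k - n)"
      using path that unfolding on_loop_def by (auto dest: spec[of _ "k - n"])
    then show ?thesis using that k loop_path_nth[of "k - n" k a b] by auto
  qed
  have regen: "regen1 Y eta [a] \<omega> = k"
    unfolding regen1_def
  proof (rule Least_equality)
    show "0 < k \<and> Y (- int k) \<omega> = [a] \<and> eta (int k) \<omega>" using k Y_back[of k] coin by simp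
  next
    fix n assume n: "0 < n \<and> Y (- int n) \<omega> = [a] \<and> eta (int n) \<omega>"
    show "k \<le> n"
    proof (rule ccontr)
      assume "\<not> k \<le> n"
      then show False using n Y_back[of n] by (cases "k - n") auto
    qed
  qed
  have "X (- int n) \<omega> = loop_letter a b n" if "n < k" for n
    using that Y_back[of n] XY[of "- int n"] by (cases "k - n") (auto simp: loop_letter_def)
  then show ?thesis unfolding Vsum_def regen by (intro sum.cong) auto
qed

context prob_space
begin

text \<open>Suppose V lies in dZ almost surely on the event that the chain
  is at the one-letter word a at time 0. The loop a, ab, ..., a b^(k-1), a ending at time 0
  followed by heads of the coin at time k has positive probability, is independent of the
  coefficients, and on it V equals the loop sum of log-coefficients. Hence the loop sum itself
  lies in dZ almost surely.\<close>
lemma loop_sum_in_lattice: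
  fixes X :: "int \<Rightarrow> 'a \<Rightarrow> 'd" and Y :: "int \<Rightarrow> 'a \<Rightarrow> 'd list" and eta :: "int \<Rightarrow> 'a \<Rightarrow> bool"
    and Qc Mc :: "int \<Rightarrow> 'd \<Rightarrow> 'a \<Rightarrow> real"
  assumes indep_coef: "indep_rv M
          (Pi\<^sub>M UNIV (\<lambda>_. borel \<Otimes>\<^sub>M borel)) (\<lambda>\<omega> (n, i). (Qc n i \<omega>, Mc n i \<omega>))
          ((Pi\<^sub>M UNIV (\<lambda>_. count_space UNIV)) \<Otimes>\<^sub>M (Pi\<^sub>M UNIV (\<lambda>_. count_space UNIV)))
          (\<lambda>\<omega>. (\<lambda>n. Y n \<omega>, \<lambda>n. eta n \<omega>))"
    and indep_Y_eta: "indep_rv M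
          (Pi\<^sub>M UNIV (\<lambda>_. count_space UNIV)) (\<lambda>\<omega> n. Y n \<omega>)
          (Pi\<^sub>M UNIV (\<lambda>_. count_space UNIV)) (\<lambda>\<omega> n. eta n \<omega>)"
    and XY: "\<And>n \<omega>. \<omega> \<in> space M \<Longrightarrow> X n \<omega> = last (Y n \<omega>)"
    and loop: "prob (cyl M Y (- int k) (loop_path a b k)) > 0"
    and coin: "\<P>(\<omega> in M. eta (int k) \<omega>) > 0"
    and k: "k > 0"
    and V: "AE \<omega> in M. Y 0 \<omega> = [a] \<longrightarrow> Vsum Mc X Y eta [a] \<omega> \<in> lattice d"
  shows "AE \<omega> in M. (\<Sum>n<k. ln \<bar>Mc (- int n) (loop_letter a b n) \<omega>\<bar>) \<in> lattice d"
proof -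
  define loop_sum :: "(int \<times> 'd \<Rightarrow> real \<times> real) \<Rightarrow> real"
    where "loop_sum F = (\<Sum>n<k. ln \<bar>snd (F (- int n, loop_letter a b n))\<bar>)" for F
  have [measurable]: "{F \<in> space (Pi\<^sub>M UNIV (\<lambda>_. borel \<Otimes>\<^sub>M borel)). loop_sum F \<notin> lattice d}
      \<in> sets (Pi\<^sub>M UNIV (\<lambda>_. borel \<Otimes>\<^sub>M borel))"
    unfolding loop_sum_def by measurable
  have [measurable]: "{f \<in> space (Pi\<^sub>M UNIV (\<lambda>_. count_space UNIV)). on_loop a b k f}
      \<in> sets (Pi\<^sub>M UNIV (\<lambda>_. count_space UNIV :: 'd list measure))"
    "{g \<in> space (Pi\<^sub>M UNIV (\<lambda>_. count_space UNIV)). g (int k)}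
      \<in> sets (Pi\<^sub>M UNIV (\<lambda>_. count_space UNIV :: bool measure))"
    unfolding on_loop_def by measurable
  have [measurable]: "{x \<in> space (Pi\<^sub>M UNIV (\<lambda>_. count_space UNIV) \<Otimes>\<^sub>M Pi\<^sub>M UNIV (\<lambda>_. count_space UNIV)).
      on_loop a b k (fst x) \<and> snd x (int k)}
      \<in> sets (Pi\<^sub>M UNIV (\<lambda>_. count_space UNIV :: 'd list measure)
               \<Otimes>\<^sub>M Pi\<^sub>M UNIV (\<lambda>_. count_space UNIV :: bool measure))"
    unfolding on_loop_def by measurable
  have loop_coin: "\<P>(\<omega> in M. on_loop a b k (\<lambda>n. Y n \<omega>) \<and> eta (int k) \<omega>) > 0"
    using indep_rv_prob[OF indep_Y_eta, where Pa = "on_loop a b k" and Pb = "\<lambda>g. g (int k)"]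
      loop coin by (simp add: cyl_loop_path)
  have "AE \<omega> in M. \<not> (loop_sum (\<lambda>(n, i). (Qc n i \<omega>, Mc n i \<omega>)) \<notin> lattice d
        \<and> on_loop a b k (\<lambda>n. Y n \<omega>) \<and> eta (int k) \<omega>)"
    using V AE_space
  proof eventually_elim
    case (elim \<omega>)
    show ?case
      using Vsum_along_loop[where Y = Y and eta = eta and X = X and Mc = Mc, OF _ _ k] XY elim
      by (auto simp: loop_sum_def dest: on_loop_end)
  qed
  with loop_coin indep_rv_null[OF indep_coef, where Pa = "\<lambda>F. loop_sum F \<notin> lattice d"
      and Pb = "\<lambda>x. on_loop a b k (fst x) \<and> snd x (int k)"]
  show ?thesis by (simp add: loop_sum_def)
qed

lemma log_moduli_iid:
  fixes Qc Mc :: "int \<Rightarrow> 'd \<Rightarrow> 'a \<Rightarrow> real"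
  assumes indep: "indep_vars (\<lambda>_. borel \<Otimes>\<^sub>M borel) (\<lambda>(n, i) \<omega>. (Qc n i \<omega>, Mc n i \<omega>)) UNIV"
    and ident: "\<And>n i. distr M (borel \<Otimes>\<^sub>M borel) (\<lambda>\<omega>. (Qc n i \<omega>, Mc n i \<omega>))
                     = distr M (borel \<Otimes>\<^sub>M borel) (\<lambda>\<omega>. (Qc 0 i \<omega>, Mc 0 i \<omega>))"
  shows "indep_vars (\<lambda>_. borel) (\<lambda>(n, i) \<omega>. ln \<bar>Mc n i \<omega>\<bar>) UNIV"
    and "distr M borel (\<lambda>\<omega>. ln \<bar>Mc n i \<omega>\<bar>) = distr M borel (\<lambda>\<omega>. ln \<bar>Mc 0 i \<omega>\<bar>)"
proof -
  have log_snd: "(\<lambda>q. ln \<bar>snd q\<bar>) \<in> borel_measurable (borel \<Otimes>\<^sub>M borel :: (real \<times> real) measure)"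
    by measurable
  have "indep_vars (\<lambda>_. borel) (\<lambda>j \<omega>. ln \<bar>snd ((\<lambda>(n, i) \<omega>. (Qc n i \<omega>, Mc n i \<omega>)) j \<omega>)\<bar>) UNIV"
    using log_snd by (intro indep_vars_compose2[OF indep])
  moreover have "(\<lambda>j \<omega>. ln \<bar>snd ((\<lambda>(n, i) \<omega>. (Qc n i \<omega>, Mc n i \<omega>)) j \<omega>)\<bar>)
      = (\<lambda>(n, i) \<omega>. ln \<bar>Mc n i \<omega>\<bar>)"
    by (simp add: fun_eq_iff split_beta)
  ultimately show "indep_vars (\<lambda>_. borel) (\<lambda>(n, i) \<omega>. ln \<bar>Mc n i \<omega>\<bar>) UNIV"
    by simp
  have pair: "(\<lambda>\<omega>. (Qc n i \<omega>, Mc n i \<omega>)) \<in> measurable M (borel \<Otimes>\<^sub>M borel)" for n i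
    using indep_vars_rv[OF indep, of "(n, i)"] by simp
  have via_pair: "distr M borel (\<lambda>\<omega>. ln \<bar>Mc n i \<omega>\<bar>)
      = distr (distr M (borel \<Otimes>\<^sub>M borel) (\<lambda>\<omega>. (Qc n i \<omega>, Mc n i \<omega>))) borel (\<lambda>q. ln \<bar>snd q\<bar>)" for n
    by (simp add: distr_distr[OF log_snd pair] o_def)
  show "distr M borel (\<lambda>\<omega>. ln \<bar>Mc n i \<omega>\<bar>) = distr M borel (\<lambda>\<omega>. ln \<bar>Mc 0 i \<omega>\<bar>)"
    unfolding via_pair[of n] via_pair[of 0] ident[of n i] ..
qed

text \<open>If for
  every letter b the loop sum L(0,a) + L(-1,b) + ... + L(-m,b) lies in dZ almost surely, then
  each L(-1,b), being independent of the rest of its loop sum, lies almost surely in a fixed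
  coset T b + dZ, and by identical distribution so does every L(n,b).\<close>
lemma loop_sums_cosets:
  fixes L :: "int \<Rightarrow> 'd::countable \<Rightarrow> 'a \<Rightarrow> real"
  assumes indep: "indep_vars (\<lambda>_. borel) (\<lambda>(n, i). L n i) UNIV"
    and ident: "\<And>n i. distr M borel (L n i) = distr M borel (L 0 i)"
    and m: "m > 0" and d: "d \<noteq> 0"
    and sums: "\<And>b. AE \<omega> in M. (\<Sum>n<Suc m. L (- int n) (loop_letter a b n) \<omega>) \<in> lattice d"
  shows "\<exists>T. AE \<omega> in M. \<forall>n c. L n c \<omega> - T c \<in> lattice d"
proof -
  have [measurable]: "L n i \<in> borel_measurable M" for n i
    using indep_vars_rv[OF indep, of "(n, i)"] by simp
  have stationary: "(AE \<omega> in M. L n i \<omega> - t \<in> lattice d) \<longleftrightarrow> (AE \<omega> in M. L 0 i \<omega> - t \<in> lattice d)"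
    for n i t
    by (rule AE_distr_eq[OF ident]) measurable
  have "\<exists>t. AE \<omega> in M. L (- 1) c \<omega> - t \<in> lattice d" for c
  proof -
    define idx where "idx n = (- int n, loop_letter a c n)" for n
    define J where "J = {..<Suc m} - {1}"
    have "indep_var borel ((\<lambda>(n, i). L n i) (- 1, c))
        borel (\<lambda>\<omega>. \<Sum>j\<in>idx ` J. (\<lambda>(n, i). L n i) j \<omega>)"
      by (rule indep_vars_sum) (auto simp: J_def idx_def intro: indep_vars_subset[OF indep])
    moreover have "inj_on idx J" by (auto simp: inj_on_def idx_def)
    then have "(\<lambda>\<omega>. \<Sum>j\<in>idx ` J. (\<lambda>(n, i). L n i) j \<omega>)
        = (\<lambda>\<omega>. \<Sum>n\<in>J. L (- int n) (loop_letter a c n) \<omega>)"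
      unfolding sum.reindex[OF \<open>inj_on idx J\<close>] by (simp add: idx_def)
    ultimately have ind: "indep_var borel (L (- 1) c) borel
        (\<lambda>\<omega>. \<Sum>n\<in>J. L (- int n) (loop_letter a c n) \<omega>)"
      by simp
    have "(\<Sum>n<Suc m. L (- int n) (loop_letter a c n) \<omega>)
        = L (- 1) c \<omega> + (\<Sum>n\<in>J. L (- int n) (loop_letter a c n) \<omega>)" for \<omega>
      unfolding J_def using m by (subst sum.remove[of _ 1]) (auto simp: loop_letter_def)
    then have "AE \<omega> in M. L (- 1) c \<omega> + (\<Sum>n\<in>J. L (- int n) (loop_letter a c n) \<omega>) \<in> lattice d"
      using sums[of c] by simp
    then show ?thesis by (rule indep_sum_lattice_coset[OF ind d])
  qed
  then obtain T where "\<And>c. AE \<omega> in M. L (- 1) c \<omega> - T c \<in> lattice d" by metis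
  then have "AE \<omega> in M. L n c \<omega> - T c \<in> lattice d" for n c
    using stationary by blast
  then show ?thesis by (auto simp: AE_all_countable)
qed

text \<open>Comparing the loop sums for b = a and for a general letter c, the coset representatives
  satisfy T a + m T c \<in> dZ and (m+1) T a \<in> dZ; hence every L(0,c) lies almost surely in the
  finer lattice (d/((m+1)m))Z.\<close>
lemma loop_cosets_refine_lattice:
  fixes L :: "int \<Rightarrow> 'd \<Rightarrow> 'a \<Rightarrow> real"
  assumes sums: "\<And>b. AE \<omega> in M. (\<Sum>n<Suc m. L (- int n) (loop_letter a b n) \<omega>) \<in> lattice d"
    and cosets: "AE \<omega> in M. \<forall>n c. L n c \<omega> - T c \<in> lattice d"
    and m: "m > 0"
  shows "AE \<omega> in M. \<forall>c. L 0 c \<omega> \<in> lattice (d / of_nat (Suc m * m))"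
proof -
  have loop_T: "T a + of_nat m * T c \<in> lattice d" for c
  proof -
    obtain \<omega> where sum: "(\<Sum>n<Suc m. L (- int n) (loop_letter a c n) \<omega>) \<in> lattice d"
      and cos: "\<forall>n c. L n c \<omega> - T c \<in> lattice d"
      using AE_ex[OF AE_conj_iff[THEN iffD2, OF conjI[OF sums[of c] cosets]]] by blast
    have "(\<Sum>n<Suc m. L (- int n) (loop_letter a c n) \<omega>)
        - (\<Sum>n<Suc m. L (- int n) (loop_letter a c n) \<omega> - T (loop_letter a c n)) \<in> lattice d"
      using cos by (intro lattice_diff[OF sum] lattice_sum) blast
    moreover have "(\<Sum>n<Suc m. T (loop_letter a c n)) = T a + of_nat m * T c"
      unfolding sum.lessThan_Suc_shift by (simp add: loop_letter_def)
    ultimately show ?thesis by (simp add: sum_subtractf)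
  qed
  have loop_a: "of_nat (Suc m) * T a \<in> lattice d"
    using loop_T[of a] by (simp add: algebra_simps)
  show ?thesis
    using cosets by eventually_elim (blast intro: lattice_refine[OF loop_a loop_T _ m])
qed

lemma selected_coefficient_in_lattice:
  fixes Mc :: "'d::countable \<Rightarrow> 'a \<Rightarrow> real" and X :: "'a \<Rightarrow> 'd"
  assumes [measurable]: "X \<in> measurable M (count_space UNIV)" "\<And>i. Mc i \<in> borel_measurable M"
    and lattice: "AE \<omega> in M. \<forall>c. ln \<bar>Mc c \<omega>\<bar> \<in> lattice d"
    and nonzero: "AE \<omega> in M. Mc (X \<omega>) \<omega> \<noteq> 0"
  shows "\<P>(\<omega> in M. ln \<bar>Mc (X \<omega>) \<omega>\<bar> \<in> lattice d \<bar> Mc (X \<omega>) \<omega> \<noteq> 0) = 1"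
proof (rule cond_prob_AE_1)
  show "AE \<omega> in M. ln \<bar>Mc (X \<omega>) \<omega>\<bar> \<in> lattice d \<and> Mc (X \<omega>) \<omega> \<noteq> 0"
    using lattice nonzero by eventually_elim blast
  show "{\<omega> \<in> space M. ln \<bar>Mc (X \<omega>) \<omega>\<bar> \<in> lattice d \<and> Mc (X \<omega>) \<omega> \<noteq> 0} \<in> events"
    by measurable
  show "{\<omega> \<in> space M. Mc (X \<omega>) \<omega> \<noteq> 0} \<in> events"
    by measurable
qed

end

theorem lemma4p2:
  fixes P :: "'w measure"
    and X :: "int \<Rightarrow> 'w \<Rightarrow> 'd::finite"
    and Y :: "int \<Rightarrow> 'w \<Rightarrow> 'd list"
    and Qc Mc :: "int \<Rightarrow> 'd \<Rightarrow> 'w \<Rightarrow> real"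
    and eta :: "int \<Rightarrow> 'w \<Rightarrow> bool"
    and p :: "'d list \<Rightarrow> 'd list \<Rightarrow> real"
    and q0 m0 r delta0 :: real
    and r0 :: nat
    and ystar :: "'d list"
  assumes P: "prob_space P"
    and Cchain: "C_chain P X"
    \<comment> \<open>coefficients: independent pairs, i.i.d. in n for fixed i\<close>
    and coef_indep: "prob_space.indep_vars P (\<lambda>_. borel \<Otimes>\<^sub>M borel)
          (\<lambda>(n, i) \<omega>. (Qc n i \<omega>, Mc n i \<omega>)) UNIV"
    and coef_ident: "\<And>n i. distr P (borel \<Otimes>\<^sub>M borel) (\<lambda>\<omega>. (Qc n i \<omega>, Mc n i \<omega>))
                         = distr P (borel \<Otimes>\<^sub>M borel) (\<lambda>\<omega>. (Qc 0 i \<omega>, Mc 0 i \<omega>))"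
    \<comment> \<open>hypothesis (i)\<close>
    and hyp_i: "AE \<omega> in P. \<bar>Qc 0 (X 0 \<omega>) \<omega>\<bar> < q0 \<and>
                   inverse m0 < \<bar>Mc 0 (X 0 \<omega>) \<omega>\<bar> \<and> \<bar>Mc 0 (X 0 \<omega>) \<omega>\<bar> < m0"
    \<comment> \<open>hypothesis (iii)\<close>
    and hyp_iii: "\<And>\<delta>. \<delta> > 0 \<Longrightarrow>
          \<P>(\<omega> in P. ln \<bar>Mc 0 (X 0 \<omega>) \<omega>\<bar> \<in> lattice \<delta> \<bar> Mc 0 (X 0 \<omega>) \<omega> \<noteq> 0) < 1"
    \<comment> \<open>Markov representation\<close>
    and Y_S: "\<And>n \<omega>. \<omega> \<in> space P \<Longrightarrow> Y n \<omega> \<noteq> []"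
    and X_Y: "\<And>n \<omega>. \<omega> \<in> space P \<Longrightarrow> X n \<omega> = last (Y n \<omega>)"
    and Y_stat: "\<And>m ys. measure P (cyl P Y m ys) = measure P (cyl P Y 0 ys)"
    and Y_markov: "\<And>n xs x y. measure P (cyl P Y n (xs @ [x, y]))
                                = measure P (cyl P Y n (xs @ [x])) * p x y"
    and Y_irred: "\<And>x y. x \<noteq> [] \<Longrightarrow> y \<noteq> [] \<Longrightarrow> (x, y) \<in> {(a, b). p a b > 0}\<^sup>*"
    and r0: "r0 > 0" "even r0"
    and delta0: "delta0 > 0"
    and Y_moves: "\<And>x y. x \<noteq> [] \<Longrightarrow> p x y > 0 \<Longrightarrow> length y = 1 \<or> (\<exists>c. y = x @ [c])"
    and Y_restart: "\<And>x b. x \<noteq> [] \<Longrightarrow>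
          p x [b] * \<P>(\<omega> in P. length (Y 0 \<omega>) = 1)
            = (\<Sum>c\<in>UNIV. p x [c]) * \<P>(\<omega> in P. Y 0 \<omega> = [b])"
    and Y_delta0: "\<And>x. x \<noteq> [] \<Longrightarrow> r0 dvd length x \<Longrightarrow> (\<Sum>c\<in>UNIV. p x [c]) = delta0"
    \<comment> \<open>independence: coefficients, the chain Y and the thinning variables eta\<close>
    and indep_coef: "indep_rv P
          (Pi\<^sub>M UNIV (\<lambda>_. borel \<Otimes>\<^sub>M borel)) (\<lambda>\<omega> (n, i). (Qc n i \<omega>, Mc n i \<omega>))
          ((Pi\<^sub>M UNIV (\<lambda>_. count_space UNIV)) \<Otimes>\<^sub>M (Pi\<^sub>M UNIV (\<lambda>_. count_space UNIV)))
          (\<lambda>\<omega>. (\<lambda>n. Y n \<omega>, \<lambda>n. eta n \<omega>))"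
    and indep_Y_eta: "indep_rv P
          (Pi\<^sub>M UNIV (\<lambda>_. count_space UNIV)) (\<lambda>\<omega> n. Y n \<omega>)
          (Pi\<^sub>M UNIV (\<lambda>_. count_space UNIV)) (\<lambda>\<omega> n. eta n \<omega>)"
    \<comment> \<open>regeneration: eta i.i.d. Bernoulli(r)\<close>
    and r: "0 < r" "r < 1"
    and eta_indep: "prob_space.indep_vars P (\<lambda>_. count_space UNIV) eta UNIV"
    and eta_law: "\<And>n. \<P>(\<omega> in P. eta n \<omega>) = r"
    and ystar: "length ystar = 1"
  shows "\<forall>\<delta>>0. \<P>(\<omega> in P. Vsum Mc X Y eta ystar \<omega> \<in> lattice \<delta> \<bar> Y 0 \<omega> = ystar) < 1"
proof (intro allI impI)
  fix \<delta> :: real assume \<delta>: "\<delta> > 0"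
  interpret prob_space P by (rule P)
  obtain a where a: "ystar = [a]" using ystar by (cases ystar) auto
  \<comment> \<open>r0 is even and positive, so the loop has length r0 = m + 1 with m > 0\<close>
  obtain m where m: "r0 = Suc m" "m > 0" using r0 by (cases r0) auto
  have Y_path: "(\<lambda>\<omega> n. Y n \<omega>) \<in> measurable P (Pi\<^sub>M UNIV (\<lambda>_. count_space UNIV))"
    using indep_Y_eta unfolding indep_rv_def by blast
  have [measurable]: "Y n \<in> measurable P (count_space UNIV)" for n
    using measurable_compose[OF Y_path measurable_component_singleton[of n UNIV]] by simp
  have X0_meas [measurable]: "X 0 \<in> measurable P (count_space UNIV)"
    using Cchain unfolding C_chain_def by blast
  have coef_pair: "(\<lambda>\<omega>. (Qc n i \<omega>, Mc n i \<omega>)) \<in> measurable P (borel \<Otimes>\<^sub>M borel)" for n i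
    using indep_vars_rv[OF coef_indep, of "(n, i)"] by simp
  have Mc_meas [measurable]: "Mc n i \<in> borel_measurable P" for n i
    using measurable_compose[OF coef_pair measurable_snd] by simp
  show "\<P>(\<omega> in P. Vsum Mc X Y eta ystar \<omega> \<in> lattice \<delta> \<bar> Y 0 \<omega> = ystar) < 1"
  proof (rule ccontr)
    assume "\<not> ?thesis"
    then have "\<P>(\<omega> in P. Vsum Mc X Y eta [a] \<omega> \<in> lattice \<delta> \<bar> Y 0 \<omega> = [a]) \<ge> 1" by (simp add: a)
    moreover have "{\<omega>\<in>space P. Y 0 \<omega> = [a]} \<in> events" by measurable
    ultimately have start: "\<P>(\<omega> in P. Y 0 \<omega> = [a]) > 0"
      and V: "AE \<omega> in P. Y 0 \<omega> = [a] \<longrightarrow> Vsum Mc X Y eta [a] \<omega> \<in> lattice \<delta>"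
      by (rule cond_prob_ge_1)+
    have "prob (cyl P Y (- int r0) (loop_path a b r0)) > 0" for b
      by (rule chain_loop_pos[OF Y_stat Y_markov Y_irred Y_moves Y_restart Y_delta0 delta0 r0(1) start])
    then have loops: "AE \<omega> in P. (\<Sum>n<Suc m. ln \<bar>Mc (- int n) (loop_letter a b n) \<omega>\<bar>) \<in> lattice \<delta>" for b
      using loop_sum_in_lattice[OF indep_coef indep_Y_eta X_Y _ _ r0(1) V] eta_law r m(1) by simp
    obtain T where cosets: "AE \<omega> in P. \<forall>n c. ln \<bar>Mc n c \<omega>\<bar> - T c \<in> lattice \<delta>"
      using loop_sums_cosets[OF log_moduli_iid[OF coef_indep coef_ident] m(2) _ loops] \<delta> by auto
    define \<delta>' where "\<delta>' = \<delta> / of_nat (Suc m * m)"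
    have \<delta>': "\<delta>' > 0"
      unfolding \<delta>'_def using m(2) by (intro divide_pos_pos \<delta>) (simp only: of_nat_0_less_iff, simp)
    have refined: "AE \<omega> in P. \<forall>c. ln \<bar>Mc 0 c \<omega>\<bar> \<in> lattice \<delta>'"
      unfolding \<delta>'_def by (rule loop_cosets_refine_lattice[OF loops cosets m(2)])
    have "AE \<omega> in P. Mc 0 (X 0 \<omega>) \<omega> \<noteq> 0"
      using hyp_i by eventually_elim (auto dest: order.strict_trans[OF positive_imp_inverse_positive])
    from selected_coefficient_in_lattice[OF X0_meas Mc_meas refined this] hyp_iii[OF \<delta>']
    show False by simp
  qed
qed

end
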